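(* Let $\langle B,\wedge,{}'\rangle$ be an algebra with $\wedge$ binary and ${}'$ unary satisfying $x\wedge y\approx y\wedge x$, $x\wedge(y\wedge z)\approx(x\wedge y)\wedge z$, $x''\approx x$, and $x'\approx (x\wedge y)'\wedge(x\wedge y')'$. Then for all $x,y,z\in B$, writing $0=z\wedge z'$, we have $(x\wedge y)'=0'\wedge(x\wedge y\wedge x)'$.
   Context: By associativity, $x\wedge y\wedge x$ is unambiguous. In such an algebra the element $z\wedge z'$ does not depend on $z$; the paper denotes it $0$. *)

theory Defs
  imports Main
begin

end

theory Submission
  imports Defs
begin

(*
  Replacing x by x' in the axiom gives x = (x' \<wedge> y)' \<wedge> (x' \<wedge> y')', so x \<wedge> (x \<wedge> y')' is the meet of
  three terms that is symmetric in x and y. Feeding this back into the axiom shows that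
  x \<wedge> x' does not depend on x; call it 0. Then 0 absorbs every element, 0' is a neutral
  element, and the axiom with y = x reads x' = (x \<wedge> x)', whence x \<wedge> x = x. The theorem
  follows since x \<wedge> y \<wedge> x = x \<wedge> y.
*)

locale huntington_meet = abel_semigroup meet
  for meet :: "'a \<Rightarrow> 'a \<Rightarrow> 'a" (infixl \<open>\<wedge>\<close> 70) +
  fixes c :: "'a \<Rightarrow> 'a"
  assumes c_c [simp]: "c (c x) = x"
    and huntington: "c x = c (x \<wedge> y) \<wedge> c (x \<wedge> c y)"
begin

lemma huntington_c: "x = c (c x \<wedge> y) \<wedge> c (c x \<wedge> c y)"
  using huntington [of "c x" y] by simp

lemma meet_c_meet_c_sym: "x \<wedge> c (x \<wedge> c y) = y \<wedge> c (y \<wedge> c x)"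
proof -
  have "x \<wedge> c (x \<wedge> c y) = c (c x \<wedge> y) \<wedge> c (c x \<wedge> c y) \<wedge> c (x \<wedge> c y)"
    by (subst huntington_c) (rule refl)
  also have "\<dots> = c (c y \<wedge> x) \<wedge> c (c y \<wedge> c x) \<wedge> c (y \<wedge> c x)"
    by (simp only: ac_simps)
  also have "\<dots> = y \<wedge> c (y \<wedge> c x)"
    by (subst (2) huntington_c [of y]) (rule refl)
  finally show ?thesis .
qed

lemma meet_c_eq: "x \<wedge> c x = y \<wedge> c y"
proof -
  have "x \<wedge> c x = x \<wedge> (c (x \<wedge> y) \<wedge> c (x \<wedge> c y))"
    by (simp only: huntington [of x y, symmetric])
  also have "\<dots> = c (x \<wedge> y) \<wedge> (x \<wedge> c (x \<wedge> c y))"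
    by (simp only: ac_simps)
  also have "\<dots> = c (y \<wedge> x) \<wedge> (y \<wedge> c (y \<wedge> c x))"
    by (simp only: meet_c_meet_c_sym commute)
  also have "\<dots> = y \<wedge> (c (y \<wedge> x) \<wedge> c (y \<wedge> c x))"
    by (simp only: ac_simps)
  also have "\<dots> = y \<wedge> c y"
    by (simp only: huntington [of y x, symmetric])
  finally show ?thesis .
qed

lemma c_eq_c_meet_self: "c x = c (x \<wedge> x) \<wedge> c (z \<wedge> c z)"
  using huntington [of x x] meet_c_eq [of x z] by simp

lemma meet_zero: "x \<wedge> (z \<wedge> c z) = z \<wedge> c z"
proof -
  have "x \<wedge> (z \<wedge> c z) = x \<wedge> (x \<wedge> c x)"
    by (simp only: meet_c_eq [of z x])
  also have "\<dots> = (x \<wedge> x) \<wedge> c (x \<wedge> x) \<wedge> c (z \<wedge> c z)"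
    by (subst c_eq_c_meet_self [of x z]) (simp only: ac_simps)
  also have "\<dots> = z \<wedge> c z"
    by (simp only: meet_c_eq [of "x \<wedge> x" z] meet_c_eq [of "z \<wedge> c z" z])
  finally show ?thesis .
qed

lemma one_meet: "c (z \<wedge> c z) \<wedge> x = x"
proof -
  have one_idem: "c (z \<wedge> c z) \<wedge> c (z \<wedge> c z) = c (z \<wedge> c z)"
    using huntington [of "z \<wedge> c z" y] meet_zero by (simp add: commute)
  have x_eq: "x = c (z \<wedge> c z) \<wedge> c (c x \<wedge> c x)"
    using huntington_c [of x x] meet_c_eq [of "c x" z] by (simp add: commute)
  have "c (z \<wedge> c z) \<wedge> x = c (z \<wedge> c z) \<wedge> c (z \<wedge> c z) \<wedge> c (c x \<wedge> c x)"
    by (subst x_eq) (simp only: assoc)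
  also have "\<dots> = x"
    by (simp only: one_idem x_eq [symmetric])
  finally show ?thesis .
qed

lemma meet_idem: "x \<wedge> x = x"
proof -
  have "c x = c (x \<wedge> x)"
    using c_eq_c_meet_self [of x x] one_meet [of x "c (x \<wedge> x)"] by (simp only: commute)
  then have "c (c (x \<wedge> x)) = c (c x)"
    by (rule arg_cong [symmetric])
  then show ?thesis
    by simp
qed

end

theorem lemma2p7:
  fixes meet :: "'a \<Rightarrow> 'a \<Rightarrow> 'a" and c :: "'a \<Rightarrow> 'a"
  assumes comm: "\<And>x y. meet x y = meet y x"
    and assoc: "\<And>x y z. meet x (meet y z) = meet (meet x y) z"
    and invol: "\<And>x. c (c x) = x"
    and ax: "\<And>x y. c x = meet (c (meet x y)) (c (meet x (c y)))"
  shows "\<And>x y z. c (meet x y) = meet (c (meet z (c z))) (c (meet (meet x y) x))"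
proof -
  interpret huntington_meet meet c
    by unfold_locales (use assoc comm invol ax in metis)+
  fix x y z
  have "meet (meet x y) x = meet x y"
    by (metis assoc commute meet_idem)
  then show "c (meet x y) = meet (c (meet z (c z))) (c (meet (meet x y) x))"
    by (simp only: one_meet)
qed

end
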